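(* Assume that $\Omega$ is a slice domain or a product domain. If $f$ and $g$ are slice regular and tame on $\Omega$, and $N(f)$ and $N(g)$ do not vanish identically, then $N(f\cdot g)=N(f)N(g)=N(g)N(f)$ on $\Omega$. As a consequence, $f\cdot g$ is a tame slice regular function on $\Omega$.
   Context: Let $A$ be a finite-dimensional real algebra with unit $1$ ($\mathbb{R}$ identified with $\mathbb{R}1$) which is alternative (the associator $(x,y,z)=(xy)z-x(yz)$ is alternating), with a $^*$-involution $x\mapsto x^c$ (real linear, $(x^c)^c=x$, $(xy)^c=y^cx^c$, $r^c=r$ for $r\in\mathbb{R}$). Let $t(x)=x+x^c$, $n(x)=xx^c$, $\mathbb{S}_A=\{J\in A:t(J)=0,n(J)=1\}$ (assumed non-empty), $Q_A=\mathbb{R}\cup\{x\in A:t(x),n(x)\in\mathbb{R},\ 4n(x)>t(x)^2\}$; every $x\in Q_A$ is $\alpha+\beta J$ with $\alpha,\beta\in\mathbb{R}$, $J\in\mathbb{S}_A$. Let $D\subseteq\mathbb{C}$ be non-empty and invariant under complex conjugation and $\Omega=\{\alpha+\beta J:\alpha+i\beta\in D,\ J\in\mathbb{S}_A\}$. Let $A_{\mathbb{C}}=\{a+\imath b:a,b\in A\}$ with product $(a+\imath b)(a'+\imath b')=aa'-bb'+\imath(ab'+ba')$, conjugation $\overline{a+\imath b}=a-\imath b$, involution $(a+\imath b)^c=a^c+\imath b^c$. A stem function is $F=F_1+\imath F_2:D\to A_{\mathbb{C}}$ with $F(\bar z)=\overline{F(z)}$; it induces the slice function $f=\mathcal{I}(F)$,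 $f(\alpha+\beta J)=F_1(\alpha+i\beta)+JF_2(\alpha+i\beta)$. Slice product $f\cdot g=\mathcal{I}(FG)$, conjugate $f^c=\mathcal{I}(F^c)$, $F^c(z)=F(z)^c$, normal function $N(f)=f\cdot f^c$. $f$ is slice preserving if $F_1,F_2$ are real valued; $f$ is tame if $N(f)$ is slice preserving and $N(f)=N(f^c)$. When $D$ is open, $f$ is slice regular if $F$ is $\mathscr{C}^1$ and $\frac12\big(\frac{\partial F}{\partial\alpha}+\imath\frac{\partial F}{\partial\beta}\big)\equiv0$ ($z=\alpha+i\beta$). $\Omega$ is a slice domain if $D$ is open, connected and meets $\mathbb{R}$; a product domain if $D$ is open, $D\cap\mathbb{R}=\emptyset$ and $D$ has two connected components exchanged by complex conjugation. *)

theory Defs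
  imports "HOL-Analysis.Analysis"
begin

text \<open>The algebra A is modelled as a finite-dimensional real vector space
 (type class euclidean_space; any finite-dimensional real vector space carries
 such a structure) with an explicit bilinear product mul, unit one and
 involution cj.  The reals are embedded as r |-> r *R one.\<close>

definition assoc3 :: "('a::real_vector \<Rightarrow> 'a \<Rightarrow> 'a) \<Rightarrow> 'a \<Rightarrow> 'a \<Rightarrow> 'a \<Rightarrow> 'a" where
  "assoc3 mul x y z = mul (mul x y) z - mul x (mul y z)"

definition alt_star_algebra ::
  "('a::euclidean_space \<Rightarrow> 'a \<Rightarrow> 'a) \<Rightarrow> 'a \<Rightarrow> ('a \<Rightarrow> 'a) \<Rightarrow> bool" where
  "alt_star_algebra mul one cj \<longleftrightarrow>
     bilinear mul \<and> one \<noteq> 0 \<and>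
     (\<forall>x. mul one x = x \<and> mul x one = x) \<and>
     (\<forall>x y. assoc3 mul x x y = 0 \<and> assoc3 mul x y x = 0 \<and> assoc3 mul y x x = 0) \<and>
     linear cj \<and> (\<forall>x. cj (cj x) = x) \<and>
     (\<forall>x y. cj (mul x y) = mul (cj y) (cj x)) \<and>
     (\<forall>r. cj (r *\<^sub>R one) = r *\<^sub>R one)"

definition trc :: "('a::real_vector \<Rightarrow> 'a) \<Rightarrow> 'a \<Rightarrow> 'a" where
  "trc cj x = x + cj x"

definition nrm :: "('a \<Rightarrow> 'a \<Rightarrow> 'a) \<Rightarrow> ('a \<Rightarrow> 'a) \<Rightarrow> 'a \<Rightarrow> 'a" where
  "nrm mul cj x = mul x (cj x)"

definition sph :: "('a::real_vector \<Rightarrow> 'a \<Rightarrow> 'a) \<Rightarrow> 'a \<Rightarrow> ('a \<Rightarrow> 'a) \<Rightarrow> 'a set" where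
  "sph mul one cj = {J. trc cj J = 0 \<and> nrm mul cj J = one}"

definition circ :: "('a::real_vector \<Rightarrow> 'a \<Rightarrow> 'a) \<Rightarrow> 'a \<Rightarrow> ('a \<Rightarrow> 'a) \<Rightarrow> complex set \<Rightarrow> 'a set" where
  "circ mul one cj D = {Re z *\<^sub>R one + Im z *\<^sub>R J | z J. z \<in> D \<and> J \<in> sph mul one cj}"

text \<open>The complexification A_C = A + i A, elements are pairs (a,b) = a + i b.\<close>
definition cmul :: "('a::real_vector \<Rightarrow> 'a \<Rightarrow> 'a) \<Rightarrow> 'a \<times> 'a \<Rightarrow> 'a \<times> 'a \<Rightarrow> 'a \<times> 'a" where
  "cmul mul p q = (mul (fst p) (fst q) - mul (snd p) (snd q),
                   mul (fst p) (snd q) + mul (snd p) (fst q))"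

definition cconj :: "'a::real_vector \<times> 'a \<Rightarrow> 'a \<times> 'a" where
  "cconj p = (fst p, - snd p)"

definition cinv :: "('a \<Rightarrow> 'a) \<Rightarrow> 'a \<times> 'a \<Rightarrow> 'a \<times> 'a" where
  "cinv cj p = (cj (fst p), cj (snd p))"

definition stem_on :: "complex set \<Rightarrow> (complex \<Rightarrow> 'a::real_vector \<times> 'a) \<Rightarrow> bool" where
  "stem_on D F \<longleftrightarrow> (\<forall>z\<in>D. F (cnj z) = cconj (F z))"

definition slice_of :: "('a::real_vector \<Rightarrow> 'a \<Rightarrow> 'a) \<Rightarrow> 'a \<Rightarrow> ('a \<Rightarrow> 'a)
    \<Rightarrow> (complex \<Rightarrow> 'a \<times> 'a) \<Rightarrow> 'a \<Rightarrow> 'a" where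
  "slice_of mul one cj F x = (SOME y. \<exists>z J. J \<in> sph mul one cj \<and>
       x = Re z *\<^sub>R one + Im z *\<^sub>R J \<and> y = fst (F z) + mul J (snd (F z)))"

definition stem_prod :: "('a::real_vector \<Rightarrow> 'a \<Rightarrow> 'a) \<Rightarrow> (complex \<Rightarrow> 'a \<times> 'a)
    \<Rightarrow> (complex \<Rightarrow> 'a \<times> 'a) \<Rightarrow> complex \<Rightarrow> 'a \<times> 'a" where
  "stem_prod mul F G = (\<lambda>z. cmul mul (F z) (G z))"

definition stem_cj :: "('a \<Rightarrow> 'a) \<Rightarrow> (complex \<Rightarrow> 'a \<times> 'a) \<Rightarrow> complex \<Rightarrow> 'a \<times> 'a" where
  "stem_cj cj F = (\<lambda>z. cinv cj (F z))"

definition stem_N :: "('a::real_vector \<Rightarrow> 'a \<Rightarrow> 'a) \<Rightarrow> ('a \<Rightarrow> 'a)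
    \<Rightarrow> (complex \<Rightarrow> 'a \<times> 'a) \<Rightarrow> complex \<Rightarrow> 'a \<times> 'a" where
  "stem_N mul cj F = stem_prod mul F (stem_cj cj F)"

definition slice_preserving_on :: "'a::real_vector \<Rightarrow> complex set \<Rightarrow> (complex \<Rightarrow> 'a \<times> 'a) \<Rightarrow> bool" where
  "slice_preserving_on one D F \<longleftrightarrow>
     (\<forall>z\<in>D. fst (F z) \<in> range (\<lambda>r. r *\<^sub>R one) \<and> snd (F z) \<in> range (\<lambda>r. r *\<^sub>R one))"

definition tame_on :: "('a::real_vector \<Rightarrow> 'a \<Rightarrow> 'a) \<Rightarrow> 'a \<Rightarrow> ('a \<Rightarrow> 'a) \<Rightarrow> complex set
    \<Rightarrow> (complex \<Rightarrow> 'a \<times> 'a) \<Rightarrow> bool" where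
  "tame_on mul one cj D F \<longleftrightarrow>
     slice_preserving_on one D (stem_N mul cj F) \<and>
     (\<forall>x\<in>circ mul one cj D. slice_of mul one cj (stem_N mul cj F) x
                            = slice_of mul one cj (stem_N mul cj (stem_cj cj F)) x)"

text \<open>Slice regular: F is C^1 on the open set D and (dF/dalpha + i dF/dbeta)/2 = 0,
 where i (a,b) = (-b,a).\<close>
definition slice_regular_on :: "complex set \<Rightarrow> (complex \<Rightarrow> 'a::euclidean_space \<times> 'a) \<Rightarrow> bool" where
  "slice_regular_on D F \<longleftrightarrow> open D \<and>
     (\<exists>F'. (\<forall>z\<in>D. (F has_derivative F' z) (at z)) \<and>
           continuous_on D (\<lambda>z. F' z 1) \<and> continuous_on D (\<lambda>z. F' z \<i>) \<and>
           (\<forall>z\<in>D. fst (F' z 1) - snd (F' z \<i>) = 0 \<and> snd (F' z 1) + fst (F' z \<i>) = 0))"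

definition slice_domain :: "complex set \<Rightarrow> bool" where
  "slice_domain D \<longleftrightarrow> open D \<and> connected D \<and> D \<inter> \<real> \<noteq> {}"

definition product_domain :: "complex set \<Rightarrow> bool" where
  "product_domain D \<longleftrightarrow> open D \<and> D \<inter> \<real> = {} \<and>
     (\<exists>D1 D2. components D = {D1, D2} \<and> D1 \<noteq> D2 \<and> cnj ` D1 = D2)"

end

theory Submission
  imports Defs "HOL-Complex_Analysis.Complex_Analysis"
begin

text \<open>Write \<open>N(F) = n\<^sub>F \<cdot> 1\<close> with \<open>n\<^sub>F\<close> complex valued. Where \<open>n\<^sub>F\<close> and \<open>n\<^sub>G\<close> do not
vanish, tameness makes \<open>F(z)\<close> and \<open>G(z)\<close> invertible in the complexified algebra, with inverses
\<open>F(z)\<^sup>c / n\<^sub>F(z)\<close> and \<open>G(z)\<^sup>c / n\<^sub>G(z)\<close>. The complexification is again alternative, and in an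
alternative algebra the inverse of a product is the reversed product of the inverses (a consequence
of the Moufang identity); hence \<open>N(FG) = N((FG)\<^sup>c) = n\<^sub>F n\<^sub>G\<close> there. The functions \<open>n\<^sub>F\<close>, \<open>n\<^sub>G\<close>
are holomorphic, so on a slice or product domain their zeros are isolated (conjugation symmetry
places a nonzero value in each component), and the identity extends to all of \<open>D\<close> by
continuity.\<close>

locale alternative_algebra =
  fixes m :: "'b::real_vector \<Rightarrow> 'b \<Rightarrow> 'b" and e :: 'b
  assumes bilinear: "bilinear m"
    and mult_unit_left: "m e x = x" and mult_unit_right: "m x e = x"
    and assoc3_left_alternative: "assoc3 m x x y = 0"
    and assoc3_right_alternative: "assoc3 m y x x = 0"
begin

lemma mult_linear [simp]:
  "m (a + b) c = m a c + m b c" "m a (b + c) = m a b + m a c"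
  "m (a - b) c = m a c - m b c" "m a (b - c) = m a b - m a c"
  "m (- a) c = - m a c" "m a (- c) = - m a c"
  "m (r *\<^sub>R a) c = r *\<^sub>R m a c" "m a (r *\<^sub>R c) = r *\<^sub>R m a c"
  "m 0 c = 0" "m a 0 = 0"
  using bilinear by (simp_all add: bilinear_ladd bilinear_radd bilinear_lsub bilinear_rsub
      bilinear_lneg bilinear_rneg bilinear_lmul bilinear_rmul bilinear_lzero bilinear_rzero)

lemma assoc3_swap12: "assoc3 m y x z = - assoc3 m x y z"
  using assoc3_left_alternative[of "x + y" z] assoc3_left_alternative[of x z]
    assoc3_left_alternative[of y z]
  by (simp add: assoc3_def algebra_simps eq_neg_iff_add_eq_0)

lemma assoc3_swap23: "assoc3 m x z y = - assoc3 m x y z"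
  using assoc3_right_alternative[of x "y + z"] assoc3_right_alternative[of x y]
    assoc3_right_alternative[of x z]
  by (simp add: assoc3_def algebra_simps eq_neg_iff_add_eq_0)

lemma assoc3_cycle: "assoc3 m y z x = assoc3 m x y z"
  using assoc3_swap12[of z y x] assoc3_swap23[of z x y] assoc3_swap12[of x z y]
    assoc3_swap23[of x y z] by simp

lemma teichmueller:
  "assoc3 m (m w x) y z - assoc3 m w (m x y) z + assoc3 m w x (m y z)
     = m w (assoc3 m x y z) + m (assoc3 m w x y) z"
  by (simp add: assoc3_def algebra_simps)

lemma moufang_left: "m (m (m x a) x) y = m x (m a (m x y))"
proof -
  have "m (m (m x a) x) y - m x (m a (m x y)) = assoc3 m (m x a) x y + assoc3 m x a (m x y)"
    by (simp add: assoc3_def)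
  also have "\<dots> = - (assoc3 m x (m x a) y + assoc3 m x (m x y) a)"
    by (simp add: assoc3_swap12[of "m x a"] assoc3_swap23[of x a])
  also have "\<dots> = 0"
    using teichmueller[of x x a y] teichmueller[of x x y a] assoc3_swap23[of "m x x" a y]
      assoc3_swap23[of x a y] assoc3_left_alternative[of x]
    by (simp add: algebra_simps)
  finally show ?thesis by simp
qed

text \<open>The maps \<open>w \<mapsto> x(uw)\<close> and \<open>w \<mapsto> u(xw)\<close> are idempotent by the Moufang identity and
sum to \<open>2 id\<close> by alternativity; this forces both to be the identity.\<close>

lemma left_inverse_property:
  assumes xu: "m x u = e" and ux: "m u x = e"
  shows "m u (m x y) = y"
proof -
  have sum: "m x (m u w) + m u (m x w) = 2 *\<^sub>R w" for w
    using assoc3_swap12[of x u w]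
    by (simp add: assoc3_def xu ux mult_unit_left algebra_simps scaleR_2)
  have idem_xu: "m x (m u (m x (m u w))) = m x (m u w)" for w
    using moufang_left[of x u "m u w"] by (simp add: xu mult_unit_left)
  have idem_ux: "m u (m x (m u (m x w))) = m u (m x w)" for w
    using moufang_left[of u x "m x w"] by (simp add: ux mult_unit_left)
  have Q: "m u (m x y) = 2 *\<^sub>R y - m x (m u y)"
    using sum[of y] by (simp add: algebra_simps)
  have "m x (m u (m u (m x y))) = m x (m u y)"
    unfolding Q by (simp add: idem_xu scaleR_2)
  with idem_ux[of y] sum[of "m u (m x y)"] have "m u (m x y) = m x (m u y)"
    by (simp add: algebra_simps scaleR_2)
  with Q have "2 *\<^sub>R m u (m x y) = 2 *\<^sub>R y"
    by (simp add: algebra_simps scaleR_2)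
  then show ?thesis by simp
qed

lemma opposite: "alternative_algebra (\<lambda>a b. m b a) e"
proof
  show "bilinear (\<lambda>a b. m b a)"
    using bilinear by (simp add: bilinear_def)
  have "assoc3 (\<lambda>a b. m b a) x y z = - assoc3 m z y x" for x y z
    by (simp add: assoc3_def)
  then show "assoc3 (\<lambda>a b. m b a) x x y = 0" "assoc3 (\<lambda>a b. m b a) y x x = 0" for x y
    by (simp_all add: assoc3_left_alternative assoc3_right_alternative)
qed (simp_all add: mult_unit_left mult_unit_right)

lemma right_inverse_property:
  assumes "m x u = e" and "m u x = e"
  shows "m (m y x) u = y"
  using alternative_algebra.left_inverse_property[OF opposite, of u x y] assms by simp

lemma inverse_mult:
  assumes xu: "m x u = e" "m u x = e" and yv: "m y v = e" "m v y = e"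
  shows "m (m x y) (m v u) = e"
proof -
  have "m y (m v u) = u"
    using left_inverse_property[OF yv(2,1)] .
  moreover have "m (m v u) x = v"
    using right_inverse_property[OF xu(2,1)] .
  moreover have "assoc3 m x y (m v u) = assoc3 m y (m v u) x"
    by (rule assoc3_cycle[symmetric])
  ultimately show ?thesis
    by (simp add: assoc3_def xu yv)
qed

lemma bilinear_cmul: "bilinear (cmul m)"
  unfolding bilinear_def
  by (auto intro!: linearI simp: cmul_def algebra_simps scaleR_diff_right)

lemma assoc3_cmul:
  "assoc3 (cmul m) (a, b) (c, d) (f, g) =
     (assoc3 m a c f - assoc3 m a d g - assoc3 m b c g - assoc3 m b d f,
      assoc3 m a c g + assoc3 m a d f + assoc3 m b c f - assoc3 m b d g)"
  by (simp add: assoc3_def cmul_def algebra_simps)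

lemma complexification: "alternative_algebra (cmul m) (e, 0)"
proof
  fix p q :: "'b \<times> 'b"
  obtain a b c d where "p = (a, b)" "q = (c, d)" by fastforce
  then show "assoc3 (cmul m) p p q = 0" "assoc3 (cmul m) q p p = 0"
    by (simp_all add: assoc3_cmul assoc3_left_alternative assoc3_right_alternative
        assoc3_swap12[of b a] assoc3_swap23[of _ b a] zero_prod_def)
qed (simp_all add: bilinear_cmul cmul_def mult_unit_left mult_unit_right)

end

lemma double_eq_cancel: "x + x = y + y \<Longrightarrow> x = (y :: 'a::real_vector)"
  by (simp flip: scaleR_2)

definition cscale :: "complex \<Rightarrow> 'a::real_vector \<times> 'a \<Rightarrow> 'a \<times> 'a" where
  "cscale c p = (Re c *\<^sub>R fst p - Im c *\<^sub>R snd p, Re c *\<^sub>R snd p + Im c *\<^sub>R fst p)"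

lemma cscale_cscale [simp]: "cscale c (cscale d p) = cscale (c * d) p"
  by (simp add: cscale_def algebra_simps)

lemma cscale_one [simp]: "cscale 1 p = p"
  by (simp add: cscale_def)

lemma cscale_ii [simp]: "cscale \<i> p = (- snd p, fst p)"
  by (simp add: cscale_def)

lemma cscale_add: "cscale c (p + q) = cscale c p + cscale c q"
  by (simp add: cscale_def algebra_simps)

lemma continuous_on_cscale:
  fixes p :: "'a::real_normed_vector \<times> 'a"
  assumes "continuous_on D c"
  shows "continuous_on D (\<lambda>z. cscale (c z) p)"
  unfolding cscale_def by (intro continuous_intros assms)

definition scalar_part :: "'a::euclidean_space \<Rightarrow> 'a \<Rightarrow> real" where
  "scalar_part one v = (v \<bullet> one) / (one \<bullet> one)"

definition cscalar_part :: "'a::euclidean_space \<Rightarrow> 'a \<times> 'a \<Rightarrow> complex" where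
  "cscalar_part one p = Complex (scalar_part one (fst p)) (scalar_part one (snd p))"

lemma bounded_linear_cscalar_part: "bounded_linear (cscalar_part one)"
  by (rule linear_conv_bounded_linear[THEN iffD1], rule linearI)
    (simp_all add: cscalar_part_def scalar_part_def complex_eq_iff
      inner_add_left add_divide_distrib)

lemma cscalar_part_cscale: "cscalar_part one (cscale c p) = c * cscalar_part one p"
  by (simp add: cscalar_part_def scalar_part_def cscale_def complex_eq_iff
      inner_diff_left inner_add_left diff_divide_distrib add_divide_distrib)

lemma cscalar_part_cconj: "cscalar_part one (cconj p) = cnj (cscalar_part one p)"
  by (simp add: cscalar_part_def scalar_part_def cconj_def complex_eq_iff)

lemma cscale_cscalar_part:
  assumes "one \<noteq> 0" and "fst p = a *\<^sub>R one" and "snd p = b *\<^sub>R one"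
  shows "p = cscale (cscalar_part one p) (one, 0)"
  using assms by (simp add: cscalar_part_def scalar_part_def cscale_def prod_eq_iff)

lemma slice_regular_on_iff:
  "slice_regular_on D F \<longleftrightarrow>
     open D \<and> (\<exists>F'. (\<forall>z\<in>D. (F has_derivative (\<lambda>h. cscale h (F' z))) (at z)) \<and> continuous_on D F')"
proof
  assume "slice_regular_on D F"
  then obtain F' where D: "open D" and F: "\<forall>z\<in>D. (F has_derivative F' z) (at z)"
    and cont: "continuous_on D (\<lambda>z. F' z 1)"
    and CR: "\<forall>z\<in>D. fst (F' z 1) - snd (F' z \<i>) = 0 \<and> snd (F' z 1) + fst (F' z \<i>) = 0"
    unfolding slice_regular_on_def by blast
  have "(F has_derivative (\<lambda>h. cscale h (F' z 1))) (at z)" if z: "z \<in> D" for z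
  proof -
    have F'z: "(F has_derivative F' z) (at z)"
      using F z by blast
    have "F' z h = cscale h (F' z 1)" for h
    proof -
      have lin: "linear (F' z)"
        using has_derivative_linear[OF F'z] .
      have "F' z h = F' z (Re h *\<^sub>R 1 + Im h *\<^sub>R \<i>)"
        by (rule arg_cong[where f = "F' z"]) (simp add: complex_eq_iff)
      also have "\<dots> = Re h *\<^sub>R F' z 1 + Im h *\<^sub>R F' z \<i>"
        by (simp only: linear_add[OF lin] linear_scale[OF lin])
      also have "F' z \<i> = cscale \<i> (F' z 1)"
        using CR z by (simp add: cscale_def prod_eq_iff eq_neg_iff_add_eq_0 add.commute)
      finally show ?thesis
        by (simp add: cscale_def prod_eq_iff)
    qed
    then have "F' z = (\<lambda>h. cscale h (F' z 1))"
      by (intro ext)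
    with F'z show ?thesis
      by metis
  qed
  with D cont show "open D \<and> (\<exists>F'. (\<forall>z\<in>D. (F has_derivative (\<lambda>h. cscale h (F' z))) (at z))
      \<and> continuous_on D F')"
    by (intro conjI exI[of _ "\<lambda>z. F' z 1"]) auto
next
  assume "open D \<and> (\<exists>F'. (\<forall>z\<in>D. (F has_derivative (\<lambda>h. cscale h (F' z))) (at z)) \<and> continuous_on D F')"
  then obtain F' where D: "open D" and F: "\<forall>z\<in>D. (F has_derivative (\<lambda>h. cscale h (F' z))) (at z)"
    and cont: "continuous_on D F'"
    by blast
  have "continuous_on D (\<lambda>z. cscale \<i> (F' z))"
    by (simp add: cont continuous_on_fst continuous_on_snd continuous_on_Pair continuous_on_minus)
  with D F cont show "slice_regular_on D F"
    unfolding slice_regular_on_def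
    by (intro conjI exI[of _ "\<lambda>z h. cscale h (F' z)"]) simp_all
qed

lemma slice_regular_on_imp_continuous_on: "slice_regular_on D F \<Longrightarrow> continuous_on D F"
  unfolding slice_regular_on_iff
  by (meson continuous_at_imp_continuous_on has_derivative_continuous)

lemma holomorphic_on_cscalar_part:
  assumes "slice_regular_on D H"
  shows "(\<lambda>z. cscalar_part one (H z)) holomorphic_on D"
proof -
  obtain H' where D: "open D" and H: "\<forall>z\<in>D. (H has_derivative (\<lambda>h. cscale h (H' z))) (at z)"
    using assms unfolding slice_regular_on_iff by blast
  have "((\<lambda>w. cscalar_part one (H w)) has_field_derivative cscalar_part one (H' z)) (at z)"
    if "z \<in> D" for z
  proof -
    have "(\<lambda>h. cscalar_part one (cscale h (H' z))) = (*) (cscalar_part one (H' z))"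
      by (rule ext) (simp add: cscalar_part_cscale mult.commute)
    then show ?thesis
      using bounded_linear.has_derivative[OF bounded_linear_cscalar_part[of one] H[rule_format, OF that]]
      by (simp add: has_field_derivative_def)
  qed
  with D show ?thesis
    using holomorphic_on_open by blast
qed

lemma continuous_at_eq_if_eventually_eq:
  fixes f g :: "'a::{perfect_space, t2_space} \<Rightarrow> 'b::t2_space"
  assumes "isCont f w" and "isCont g w" and "\<forall>\<^sub>F z in at w. f z = g z"
  shows "f w = g w"
proof (rule tendsto_unique[OF at_neq_bot])
  show "(f \<longlongrightarrow> f w) (at w)"
    using assms(1) isCont_def by blast
  show "(f \<longlongrightarrow> g w) (at w)"
    using tendsto_cong[OF assms(3)] assms(2) isCont_def by blast
qed

lemma product_domain_component_cnj:
  assumes "product_domain D" and "w \<in> D" and "z \<in> D"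
  shows "z \<in> connected_component_set D w \<or> cnj z \<in> connected_component_set D w"
proof -
  obtain D1 D2 where comps: "components D = {D1, D2}" and D2: "D2 = cnj ` D1"
    using assms(1) unfolding product_domain_def by blast
  have D1: "D1 = cnj ` D2"
    using D2 by (simp add: image_image)
  define Cw Cz where "Cw = connected_component_set D w" and "Cz = connected_component_set D z"
  have Cw: "Cw = D1 \<or> Cw = D2"
    unfolding Cw_def using componentsI[OF assms(2)] comps by simp
  have Cz: "Cz = D1 \<or> Cz = D2"
    unfolding Cz_def using componentsI[OF assms(3)] comps by simp
  have "z \<in> Cz"
    unfolding Cz_def using assms(3) by simp
  then have "cnj z \<in> cnj ` Cz"
    by (rule imageI)
  with Cw Cz \<open>z \<in> Cz\<close> D1 D2 have "z \<in> Cw \<or> cnj z \<in> Cw"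
    by metis
  then show ?thesis
    unfolding Cw_def .
qed

lemma eventually_nonzero_in_domain:
  assumes dom: "slice_domain D \<or> product_domain D" and hol: "h holomorphic_on D"
    and sym: "\<And>z. z \<in> D \<Longrightarrow> h (cnj z) = cnj (h z)"
    and z0: "z0 \<in> D" "h z0 \<noteq> 0" and w: "w \<in> D"
  shows "\<forall>\<^sub>F z in at w. h z \<noteq> 0 \<and> z \<in> D"
proof -
  have "\<exists>S. open S \<and> connected S \<and> S \<subseteq> D \<and> w \<in> S \<and> (\<exists>z1\<in>S. h z1 \<noteq> 0)"
    using dom
  proof
    assume "slice_domain D"
    then show ?thesis
      using w z0 unfolding slice_domain_def by blast
  next
    assume pd: "product_domain D"
    define S where "S = connected_component_set D w"
    have "open D"
      using pd unfolding product_domain_def by blast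
    then have "open S" "connected S" "S \<subseteq> D" "w \<in> S"
      using w by (simp_all add: S_def open_connected_component connected_component_subset)
    moreover have "\<exists>z1\<in>S. h z1 \<noteq> 0"
    proof -
      have "h (cnj z0) \<noteq> 0"
        using sym[OF z0(1)] z0(2) by simp
      then show ?thesis
        using product_domain_component_cnj[OF pd w z0(1)] z0(2) unfolding S_def by blast
    qed
    ultimately show ?thesis
      by blast
  qed
  then obtain S z1 where S: "open S" "connected S" "S \<subseteq> D" "w \<in> S"
    and z1: "z1 \<in> S" "h z1 \<noteq> 0"
    by blast
  have "\<forall>\<^sub>F z in at w. h z \<noteq> 0 \<and> z \<in> S"
    by (rule non_zero_neighbour_alt[OF holomorphic_on_subset[OF hol S(3)] S(1,2,4) z1])
  then show ?thesis
    by (rule eventually_mono) (use S(3) in auto)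
qed

lemma eq_if_eq_where_nonzero:
  fixes f g :: "complex \<Rightarrow> 'b::t2_space"
  assumes dom: "slice_domain D \<or> product_domain D"
    and hol: "h\<^sub>1 holomorphic_on D" "h\<^sub>2 holomorphic_on D"
    and sym: "\<And>z. z \<in> D \<Longrightarrow> h\<^sub>1 (cnj z) = cnj (h\<^sub>1 z)" "\<And>z. z \<in> D \<Longrightarrow> h\<^sub>2 (cnj z) = cnj (h\<^sub>2 z)"
    and nz: "\<exists>z\<in>D. h\<^sub>1 z \<noteq> 0" "\<exists>z\<in>D. h\<^sub>2 z \<noteq> 0"
    and cont: "continuous_on D f" "continuous_on D g"
    and eq: "\<And>z. z \<in> D \<Longrightarrow> h\<^sub>1 z \<noteq> 0 \<Longrightarrow> h\<^sub>2 z \<noteq> 0 \<Longrightarrow> f z = g z"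
    and w: "w \<in> D"
  shows "f w = g w"
proof (rule continuous_at_eq_if_eventually_eq)
  have "open D"
    using dom unfolding slice_domain_def product_domain_def by blast
  then show "isCont f w" "isCont g w"
    using cont w by (simp_all add: continuous_on_eq_continuous_at)
  obtain z\<^sub>1 z\<^sub>2 where z\<^sub>1: "z\<^sub>1 \<in> D" "h\<^sub>1 z\<^sub>1 \<noteq> 0" and z\<^sub>2: "z\<^sub>2 \<in> D" "h\<^sub>2 z\<^sub>2 \<noteq> 0"
    using nz by blast
  have "\<forall>\<^sub>F z in at w. h\<^sub>1 z \<noteq> 0 \<and> z \<in> D"
    by (rule eventually_nonzero_in_domain[OF dom hol(1) sym(1) z\<^sub>1 w])
  moreover have "\<forall>\<^sub>F z in at w. h\<^sub>2 z \<noteq> 0 \<and> z \<in> D"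
    by (rule eventually_nonzero_in_domain[OF dom hol(2) sym(2) z\<^sub>2 w])
  ultimately show "\<forall>\<^sub>F z in at w. f z = g z"
    by eventually_elim (use eq in blast)
qed

locale alternative_star_algebra =
  fixes mul :: "'a::euclidean_space \<Rightarrow> 'a \<Rightarrow> 'a" and one :: 'a and cj :: "'a \<Rightarrow> 'a"
  assumes alt_star: "alt_star_algebra mul one cj"
begin

lemma one_neq_zero: "one \<noteq> 0"
  and cj_linear: "linear cj"
  and cj_cj [simp]: "cj (cj x) = x"
  and cj_mult: "cj (mul x y) = mul (cj y) (cj x)"
  using alt_star unfolding alt_star_algebra_def by auto

sublocale A: alternative_algebra mul one
  using alt_star unfolding alt_star_algebra_def by unfold_locales auto

sublocale C: alternative_algebra "cmul mul" "(one, 0)"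
  by (rule A.complexification)

lemma cj_one [simp]: "cj one = one"
  using alt_star unfolding alt_star_algebra_def by (metis scaleR_one)

lemma cj_simps [simp]: "cj (a + b) = cj a + cj b" "cj (a - b) = cj a - cj b" "cj (- a) = - cj a"
  "cj (r *\<^sub>R a) = r *\<^sub>R cj a" "cj 0 = 0"
  using cj_linear by (simp_all add: linear_add linear_diff linear_neg linear_scale linear_0)

lemma cmul_cscale_left: "cmul mul (cscale c p) q = cscale c (cmul mul p q)"
  by (simp add: cmul_def cscale_def algebra_simps)

lemma cmul_cscale_right: "cmul mul p (cscale c q) = cscale c (cmul mul p q)"
  by (simp add: cmul_def cscale_def algebra_simps)

lemma cinv_cinv [simp]: "cinv cj (cinv cj p) = p"
  by (simp add: cinv_def)

lemma cinv_cmul: "cinv cj (cmul mul p q) = cmul mul (cinv cj q) (cinv cj p)"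
  by (simp add: cinv_def cmul_def cj_mult algebra_simps)

lemma cinv_cscale: "cinv cj (cscale c p) = cscale c (cinv cj p)"
  by (simp add: cinv_def cscale_def)

lemma cmul_scalar_inverse_mult:
  assumes p: "cmul mul p r = cscale a (one, 0)" "cmul mul r p = cscale a (one, 0)"
    and q: "cmul mul q s = cscale b (one, 0)" "cmul mul s q = cscale b (one, 0)"
    and "a \<noteq> 0" and "b \<noteq> 0"
  shows "cmul mul (cmul mul p q) (cmul mul s r) = cscale (a * b) (one, 0)"
proof -
  have "cmul mul (cmul mul p q) (cmul mul (cscale (1 / b) s) (cscale (1 / a) r)) = (one, 0)"
    using assms by (intro C.inverse_mult) (simp_all add: cmul_cscale_left cmul_cscale_right)
  then have "cscale (1 / (a * b)) (cmul mul (cmul mul p q) (cmul mul s r)) = (one, 0)"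
    by (simp add: cmul_cscale_left cmul_cscale_right mult.commute)
  then have "cscale (a * b) (cscale (1 / (a * b)) (cmul mul (cmul mul p q) (cmul mul s r)))
      = cscale (a * b) (one, 0)"
    by simp
  with assms show ?thesis
    by simp
qed

lemma stem_on_stem_prod: "stem_on D F \<Longrightarrow> stem_on D G \<Longrightarrow> stem_on D (stem_prod mul F G)"
  by (simp add: stem_on_def stem_prod_def cmul_def cconj_def)

lemma stem_on_stem_cj: "stem_on D F \<Longrightarrow> stem_on D (stem_cj cj F)"
  by (simp add: stem_on_def stem_cj_def cinv_def cconj_def)

lemma stem_on_stem_N: "stem_on D F \<Longrightarrow> stem_on D (stem_N mul cj F)"
  by (simp add: stem_N_def stem_on_stem_prod stem_on_stem_cj)

lemma stem_N_apply: "stem_N mul cj F z = cmul mul (F z) (cinv cj (F z))"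
  by (simp add: stem_N_def stem_prod_def stem_cj_def)

lemma sph_cj: "J \<in> sph mul one cj \<Longrightarrow> cj J = - J"
  by (simp add: sph_def trc_def eq_neg_iff_add_eq_0 add.commute)

lemma sph_mult_cj: "J \<in> sph mul one cj \<Longrightarrow> mul J (cj J) = one"
  by (simp add: sph_def nrm_def)

lemma sph_mult_self:
  assumes "J \<in> sph mul one cj"
  shows "mul J J = - one"
proof -
  have "mul J (cj J) = - mul J J"
    using sph_cj[OF assms] by simp
  then show ?thesis
    using sph_mult_cj[OF assms] by simp
qed

lemma sph_mult_mult: "J \<in> sph mul one cj \<Longrightarrow> mul J (mul J y) = - y"
  using A.assoc3_left_alternative[of J y] sph_mult_self[of J]
  by (simp add: assoc3_def A.mult_unit_left)

lemma sph_uminus: "J \<in> sph mul one cj \<Longrightarrow> - J \<in> sph mul one cj"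
proof -
  assume J: "J \<in> sph mul one cj"
  have "mul (- J) (cj (- J)) = one"
    using sph_mult_cj[OF J] by simp
  then show ?thesis
    using sph_cj[OF J] by (simp add: sph_def trc_def nrm_def)
qed

lemma circI: "z \<in> D \<Longrightarrow> J \<in> sph mul one cj \<Longrightarrow> Re z *\<^sub>R one + Im z *\<^sub>R J \<in> circ mul one cj D"
  unfolding circ_def by blast

lemma circE:
  assumes "x \<in> circ mul one cj D"
  obtains z J where "z \<in> D" "J \<in> sph mul one cj" "x = Re z *\<^sub>R one + Im z *\<^sub>R J"
  using assms unfolding circ_def by blast

lemma circ_repr_unique:
  assumes J: "J \<in> sph mul one cj" and J': "J' \<in> sph mul one cj"
    and eq: "a *\<^sub>R one + b *\<^sub>R J = a' *\<^sub>R one + b' *\<^sub>R J'"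
  shows "a' = a \<and> (b' = b \<and> (b = 0 \<or> J' = J) \<or> b' = - b \<and> J' = - J)"
proof -
  have "a *\<^sub>R one - b *\<^sub>R J = a' *\<^sub>R one - b' *\<^sub>R J'"
    using arg_cong[OF eq, of cj] by (simp add: sph_cj J J')
  with eq have "(a *\<^sub>R one + b *\<^sub>R J) + (a *\<^sub>R one - b *\<^sub>R J)
      = (a' *\<^sub>R one + b' *\<^sub>R J') + (a' *\<^sub>R one - b' *\<^sub>R J')"
    by simp
  then have "(a + a) *\<^sub>R one = (a' + a') *\<^sub>R one"
    by (simp only: scaleR_left_distrib) (simp add: algebra_simps)
  then have a: "a' = a"
    using one_neq_zero by (simp only: scaleR_cancel_right) simp
  with eq have b: "b *\<^sub>R J = b' *\<^sub>R J'"
    by simp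
  have "(b * b) *\<^sub>R one = (b' * b') *\<^sub>R one"
    using arg_cong[OF b, of "\<lambda>x. mul x (cj x)"] by (simp add: sph_mult_cj J J')
  then have "b' = b \<or> b' = - b"
    using one_neq_zero by (auto simp: square_eq_iff)
  then show ?thesis
  proof
    assume "b' = b"
    with b have "b = 0 \<or> J' = J"
      by auto
    with a \<open>b' = b\<close> show ?thesis
      by blast
  next
    assume "b' = - b"
    with b have "b *\<^sub>R (J + J') = 0"
      by (simp add: algebra_simps)
    then have "b = 0 \<or> J' = - J"
      by (simp add: eq_neg_iff_add_eq_0 add.commute)
    with a \<open>b' = - b\<close> show ?thesis
      by auto
  qed
qed

lemma stem_on_real_snd:
  assumes "stem_on D H" and "z \<in> D" and "Im z = 0"
  shows "snd (H z) = 0"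
proof -
  have "cnj z = z"
    using assms(3) by (simp add: complex_eq_iff)
  then have "snd (H z) = - snd (H z)"
    using assms(1,2) unfolding stem_on_def cconj_def by (metis snd_conv)
  then have "2 *\<^sub>R snd (H z) = 0"
    by (simp add: scaleR_2 eq_neg_iff_add_eq_0)
  then show ?thesis
    by simp
qed

lemma slice_of_stem:
  assumes H: "stem_on D H" and z: "z \<in> D" and J: "J \<in> sph mul one cj"
  shows "slice_of mul one cj H (Re z *\<^sub>R one + Im z *\<^sub>R J) = fst (H z) + mul J (snd (H z))"
proof -
  have repr_indep: "fst (H z') + mul J' (snd (H z')) = fst (H z) + mul J (snd (H z))"
    if J': "J' \<in> sph mul one cj" and eq: "Re z *\<^sub>R one + Im z *\<^sub>R J = Re z' *\<^sub>R one + Im z' *\<^sub>R J'"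
    for z' J'
  proof -
    have "z' = z \<and> (Im z = 0 \<or> J' = J) \<or> z' = cnj z \<and> J' = - J"
      using circ_repr_unique[OF J J' eq] by (auto simp: complex_eq_iff)
    then show ?thesis
    proof (elim disjE conjE)
      assume "z' = z" "Im z = 0"
      then show ?thesis
        using stem_on_real_snd[OF H z] by simp
    next
      assume "z' = z" "J' = J"
      then show ?thesis
        by simp
    next
      assume "z' = cnj z" "J' = - J"
      then show ?thesis
        using H z unfolding stem_on_def cconj_def by simp
    qed
  qed
  show ?thesis
    unfolding slice_of_def
  proof (rule someI2_ex)
    show "\<exists>y z' J'. J' \<in> sph mul one cj \<and> Re z *\<^sub>R one + Im z *\<^sub>R J = Re z' *\<^sub>R one + Im z' *\<^sub>R J'
        \<and> y = fst (H z') + mul J' (snd (H z'))"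
      using J by blast
  qed (use repr_indep in blast)
qed

lemma slice_of_eq_iff_stem_eq:
  assumes "sph mul one cj \<noteq> {}" and H: "stem_on D H" and K: "stem_on D K"
  shows "(\<forall>x\<in>circ mul one cj D. slice_of mul one cj H x = slice_of mul one cj K x)
     \<longleftrightarrow> (\<forall>z\<in>D. H z = K z)"
proof
  assume eq: "\<forall>x\<in>circ mul one cj D. slice_of mul one cj H x = slice_of mul one cj K x"
  obtain J where J: "J \<in> sph mul one cj"
    using assms(1) by blast
  show "\<forall>z\<in>D. H z = K z"
  proof
    fix z assume z: "z \<in> D"
    have slice_eq: "fst (H z) + mul J' (snd (H z)) = fst (K z) + mul J' (snd (K z))"
      if "J' \<in> sph mul one cj" for J'
      using eq slice_of_stem[OF H z that] slice_of_stem[OF K z that] circI[OF z that] by simp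
    have "fst (H z) + fst (H z) = fst (K z) + fst (K z)"
      using arg_cong2[OF slice_eq[OF J] slice_eq[OF sph_uminus[OF J]], of "(+)"]
      by (simp add: algebra_simps)
    then have fst_eq: "fst (H z) = fst (K z)"
      by (rule double_eq_cancel)
    with slice_eq[OF J] have "mul J (mul J (snd (H z))) = mul J (mul J (snd (K z)))"
      by simp
    with fst_eq show "H z = K z"
      by (simp add: sph_mult_mult J prod_eq_iff)
  qed
next
  assume "\<forall>z\<in>D. H z = K z"
  then show "\<forall>x\<in>circ mul one cj D. slice_of mul one cj H x = slice_of mul one cj K x"
    unfolding circ_def using slice_of_stem[OF H] slice_of_stem[OF K] by auto
qed

lemma slice_of_cscale_unit:
  assumes "stem_on D H" and "z \<in> D" and "J \<in> sph mul one cj" and "H z = cscale c (one, 0)"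
  shows "slice_of mul one cj H (Re z *\<^sub>R one + Im z *\<^sub>R J) = Re c *\<^sub>R one + Im c *\<^sub>R J"
  using slice_of_stem[OF assms(1-3)] assms(4) by (simp add: cscale_def A.mult_unit_right)

lemma sph_mult_complex:
  assumes "J \<in> sph mul one cj"
  shows "mul (Re a *\<^sub>R one + Im a *\<^sub>R J) (Re b *\<^sub>R one + Im b *\<^sub>R J)
       = Re (a * b) *\<^sub>R one + Im (a * b) *\<^sub>R J"
  using sph_mult_self[OF assms] by (simp add: A.mult_unit_left A.mult_unit_right algebra_simps)

lemma bounded_bilinear_cmul: "bounded_bilinear (cmul mul)"
  using C.bilinear by (simp add: bilinear_conv_bounded_bilinear)

lemma bounded_linear_cinv: "bounded_linear (cinv cj)"
  by (rule linear_conv_bounded_linear[THEN iffD1], rule linearI) (simp_all add: cinv_def)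

lemma slice_regular_on_stem_prod:
  assumes "slice_regular_on D F" and "slice_regular_on D G"
  shows "slice_regular_on D (stem_prod mul F G)"
proof -
  obtain F' where D: "open D" and F: "\<forall>z\<in>D. (F has_derivative (\<lambda>h. cscale h (F' z))) (at z)"
    and cont_F': "continuous_on D F'"
    using assms(1) unfolding slice_regular_on_iff by blast
  obtain G' where G: "\<forall>z\<in>D. (G has_derivative (\<lambda>h. cscale h (G' z))) (at z)"
    and cont_G': "continuous_on D G'"
    using assms(2) unfolding slice_regular_on_iff by blast
  define P' where "P' z = cmul mul (F z) (G' z) + cmul mul (F' z) (G z)" for z
  have "(stem_prod mul F G has_derivative (\<lambda>h. cscale h (P' z))) (at z)" if "z \<in> D" for z
  proof -
    have "(\<lambda>h. cmul mul (F z) (cscale h (G' z)) + cmul mul (cscale h (F' z)) (G z))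
        = (\<lambda>h. cscale h (P' z))"
      by (simp add: P'_def cmul_cscale_left cmul_cscale_right cscale_add)
    with bounded_bilinear.FDERIV[OF bounded_bilinear_cmul F[rule_format, OF that] G[rule_format, OF that]]
    show ?thesis
      unfolding stem_prod_def by simp
  qed
  moreover have "continuous_on D P'"
    using slice_regular_on_imp_continuous_on[OF assms(1)] slice_regular_on_imp_continuous_on[OF assms(2)]
      cont_F' cont_G' unfolding P'_def
    by (intro continuous_on_add bounded_bilinear.continuous_on[OF bounded_bilinear_cmul])
  ultimately show ?thesis
    unfolding slice_regular_on_iff using D by blast
qed

lemma slice_regular_on_stem_cj:
  assumes "slice_regular_on D F"
  shows "slice_regular_on D (stem_cj cj F)"
proof -
  obtain F' where D: "open D" and F: "\<forall>z\<in>D. (F has_derivative (\<lambda>h. cscale h (F' z))) (at z)"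
    and cont_F': "continuous_on D F'"
    using assms unfolding slice_regular_on_iff by blast
  define C' where "C' z = cinv cj (F' z)" for z
  have "(stem_cj cj F has_derivative (\<lambda>h. cscale h (C' z))) (at z)" if "z \<in> D" for z
  proof -
    have "((\<lambda>w. cinv cj (F w)) has_derivative (\<lambda>h. cinv cj (cscale h (F' z)))) (at z)"
      by (rule bounded_linear.has_derivative[OF bounded_linear_cinv F[rule_format, OF that]])
    then show ?thesis
      by (simp only: stem_cj_def C'_def cinv_cscale)
  qed
  moreover have "continuous_on D C'"
    unfolding C'_def by (rule bounded_linear.continuous_on[OF bounded_linear_cinv cont_F'])
  ultimately show ?thesis
    unfolding slice_regular_on_iff using D by blast
qed

lemma slice_regular_on_stem_N: "slice_regular_on D F \<Longrightarrow> slice_regular_on D (stem_N mul cj F)"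
  by (simp add: stem_N_def slice_regular_on_stem_prod slice_regular_on_stem_cj)

abbreviation normal_scalar :: "(complex \<Rightarrow> 'a \<times> 'a) \<Rightarrow> complex \<Rightarrow> complex" where
  "normal_scalar F z \<equiv> cscalar_part one (stem_N mul cj F z)"

lemma tame_onD:
  assumes "sph mul one cj \<noteq> {}" and F: "stem_on D F" and "tame_on mul one cj D F" and z: "z \<in> D"
  shows "stem_N mul cj F z = cscale (normal_scalar F z) (one, 0)"
    and "stem_N mul cj (stem_cj cj F) z = stem_N mul cj F z"
proof -
  obtain a b where "fst (stem_N mul cj F z) = a *\<^sub>R one" "snd (stem_N mul cj F z) = b *\<^sub>R one"
    using assms(3) z unfolding tame_on_def slice_preserving_on_def by blast
  then show "stem_N mul cj F z = cscale (normal_scalar F z) (one, 0)"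
    by (rule cscale_cscalar_part[OF one_neq_zero])
  show "stem_N mul cj (stem_cj cj F) z = stem_N mul cj F z"
    using assms(3) z slice_of_eq_iff_stem_eq[OF assms(1) stem_on_stem_N[OF stem_on_stem_cj[OF F]]
        stem_on_stem_N[OF F]]
    unfolding tame_on_def by auto
qed

lemma tame_onI:
  assumes "sph mul one cj \<noteq> {}" and H: "stem_on D H"
    and N: "\<And>z. z \<in> D \<Longrightarrow> stem_N mul cj H z = cscale (c z) (one, 0)"
    and N_cj: "\<And>z. z \<in> D \<Longrightarrow> stem_N mul cj (stem_cj cj H) z = cscale (c z) (one, 0)"
  shows "tame_on mul one cj D H"
  unfolding tame_on_def
proof
  show "slice_preserving_on one D (stem_N mul cj H)"
    unfolding slice_preserving_on_def using N by (auto simp: cscale_def intro: rangeI)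
  have "\<forall>z\<in>D. stem_N mul cj H z = stem_N mul cj (stem_cj cj H) z"
    using N N_cj by simp
  then show "\<forall>x\<in>circ mul one cj D. slice_of mul one cj (stem_N mul cj H) x
      = slice_of mul one cj (stem_N mul cj (stem_cj cj H)) x"
    using slice_of_eq_iff_stem_eq[OF assms(1) stem_on_stem_N[OF H] stem_on_stem_N[OF stem_on_stem_cj[OF H]]]
    by blast
qed

lemma normal_scalar_holomorphic: "slice_regular_on D F \<Longrightarrow> normal_scalar F holomorphic_on D"
  by (rule holomorphic_on_cscalar_part[OF slice_regular_on_stem_N])

lemma normal_scalar_cnj:
  assumes "stem_on D F" and "z \<in> D"
  shows "normal_scalar F (cnj z) = cnj (normal_scalar F z)"
proof -
  have "stem_N mul cj F (cnj z) = cconj (stem_N mul cj F z)"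
    using stem_on_stem_N[OF assms(1)] assms(2) unfolding stem_on_def by blast
  then show ?thesis
    by (simp only: cscalar_part_cconj)
qed

lemma normal_scalar_nonzero:
  assumes "sph mul one cj \<noteq> {}" and F: "stem_on D F" and tame: "tame_on mul one cj D F"
    and "\<exists>x\<in>circ mul one cj D. slice_of mul one cj (stem_N mul cj F) x \<noteq> 0"
  shows "\<exists>z\<in>D. normal_scalar F z \<noteq> 0"
proof -
  obtain z J where z: "z \<in> D" and J: "J \<in> sph mul one cj"
    and nz: "slice_of mul one cj (stem_N mul cj F) (Re z *\<^sub>R one + Im z *\<^sub>R J) \<noteq> 0"
    using assms(4) by (metis circE)
  have "normal_scalar F z \<noteq> 0"
  proof
    assume "normal_scalar F z = 0"
    then have "stem_N mul cj F z = cscale 0 (one, 0)"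
      using tame_onD(1)[OF assms(1) F tame z] by simp
    with nz show False
      using slice_of_cscale_unit[OF stem_on_stem_N[OF F] z J] by simp
  qed
  with z show ?thesis
    by blast
qed

lemma normal_stem_prod:
  assumes sph: "sph mul one cj \<noteq> {}" and dom: "slice_domain D \<or> product_domain D"
    and F: "stem_on D F" "slice_regular_on D F" "tame_on mul one cj D F"
    and G: "stem_on D G" "slice_regular_on D G" "tame_on mul one cj D G"
    and nz: "\<exists>z\<in>D. normal_scalar F z \<noteq> 0" "\<exists>z\<in>D. normal_scalar G z \<noteq> 0"
    and w: "w \<in> D"
  shows "stem_N mul cj (stem_prod mul F G) w = cscale (normal_scalar F w * normal_scalar G w) (one, 0)"
    and "stem_N mul cj (stem_cj cj (stem_prod mul F G)) w
      = cscale (normal_scalar F w * normal_scalar G w) (one, 0)"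
proof -
  let ?c = "\<lambda>z. cscale (normal_scalar F z * normal_scalar G z) (one, 0)"
  have NF: "cmul mul (F z) (cinv cj (F z)) = cscale (normal_scalar F z) (one, 0)"
    "cmul mul (cinv cj (F z)) (F z) = cscale (normal_scalar F z) (one, 0)" if "z \<in> D" for z
    using tame_onD[OF sph F(1,3) that] by (simp_all add: stem_N_apply stem_cj_def)
  have NG: "cmul mul (G z) (cinv cj (G z)) = cscale (normal_scalar G z) (one, 0)"
    "cmul mul (cinv cj (G z)) (G z) = cscale (normal_scalar G z) (one, 0)" if "z \<in> D" for z
    using tame_onD[OF sph G(1,3) that] by (simp_all add: stem_N_apply stem_cj_def)
  have cont_c: "continuous_on D ?c"
    using holomorphic_on_imp_continuous_on[OF normal_scalar_holomorphic[OF F(2)]]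
      holomorphic_on_imp_continuous_on[OF normal_scalar_holomorphic[OF G(2)]]
    by (intro continuous_on_cscale continuous_on_mult)
  note extend = eq_if_eq_where_nonzero[OF dom normal_scalar_holomorphic[OF F(2)]
      normal_scalar_holomorphic[OF G(2)] normal_scalar_cnj[OF F(1)] normal_scalar_cnj[OF G(1)] nz
      _ cont_c _ w]
  show "stem_N mul cj (stem_prod mul F G) w = ?c w"
  proof (rule extend)
    show "continuous_on D (stem_N mul cj (stem_prod mul F G))"
      by (intro slice_regular_on_imp_continuous_on slice_regular_on_stem_N
          slice_regular_on_stem_prod F(2) G(2))
    show "stem_N mul cj (stem_prod mul F G) z = ?c z"
      if "z \<in> D" "normal_scalar F z \<noteq> 0" "normal_scalar G z \<noteq> 0" for z
      using cmul_scalar_inverse_mult[OF NF[OF that(1)] NG[OF that(1)] that(2,3)]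
      by (simp add: stem_N_apply stem_prod_def cinv_cmul)
  qed
  show "stem_N mul cj (stem_cj cj (stem_prod mul F G)) w = ?c w"
  proof (rule extend)
    show "continuous_on D (stem_N mul cj (stem_cj cj (stem_prod mul F G)))"
      by (intro slice_regular_on_imp_continuous_on slice_regular_on_stem_N slice_regular_on_stem_cj
          slice_regular_on_stem_prod F(2) G(2))
    show "stem_N mul cj (stem_cj cj (stem_prod mul F G)) z = ?c z"
      if "z \<in> D" "normal_scalar F z \<noteq> 0" "normal_scalar G z \<noteq> 0" for z
      using cmul_scalar_inverse_mult[OF NG(2,1)[OF that(1)] NF(2,1)[OF that(1)] that(3,2)]
      by (simp add: stem_N_apply stem_prod_def stem_cj_def cinv_cmul mult.commute)
  qed
qed

end

theorem proposition2p6: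
  fixes mul :: "'a::euclidean_space \<Rightarrow> 'a \<Rightarrow> 'a" and one :: 'a and cj :: "'a \<Rightarrow> 'a"
    and D :: "complex set" and F G :: "complex \<Rightarrow> 'a \<times> 'a"
  assumes alg: "alt_star_algebra mul one cj"
    and sph_ne: "sph mul one cj \<noteq> {}"
    and D_ne: "D \<noteq> {}" and D_cnj: "cnj ` D = D"
    and dom: "slice_domain D \<or> product_domain D"
    and stemF: "stem_on D F" and stemG: "stem_on D G"
    and regF: "slice_regular_on D F" and regG: "slice_regular_on D G"
    and tameF: "tame_on mul one cj D F" and tameG: "tame_on mul one cj D G"
    and NF: "\<exists>x\<in>circ mul one cj D. slice_of mul one cj (stem_N mul cj F) x \<noteq> 0"
    and NG: "\<exists>x\<in>circ mul one cj D. slice_of mul one cj (stem_N mul cj G) x \<noteq> 0"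
  shows "(\<forall>x\<in>circ mul one cj D.
            slice_of mul one cj (stem_N mul cj (stem_prod mul F G)) x
              = mul (slice_of mul one cj (stem_N mul cj F) x) (slice_of mul one cj (stem_N mul cj G) x)
          \<and> mul (slice_of mul one cj (stem_N mul cj F) x) (slice_of mul one cj (stem_N mul cj G) x)
              = mul (slice_of mul one cj (stem_N mul cj G) x) (slice_of mul one cj (stem_N mul cj F) x))
         \<and> slice_regular_on D (stem_prod mul F G)
         \<and> tame_on mul one cj D (stem_prod mul F G)"
proof -
  interpret alternative_star_algebra mul one cj
    by (rule alternative_star_algebra.intro[OF alg])
  have nz: "\<exists>z\<in>D. normal_scalar F z \<noteq> 0" "\<exists>z\<in>D. normal_scalar G z \<noteq> 0"
    using normal_scalar_nonzero[OF sph_ne stemF tameF NF] normal_scalar_nonzero[OF sph_ne stemG tameG NG] .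
  note N_prod = normal_stem_prod[OF sph_ne dom stemF regF tameF stemG regG tameG nz]
  let ?N = "\<lambda>H. slice_of mul one cj (stem_N mul cj H)"
  have "?N (stem_prod mul F G) x = mul (?N F x) (?N G x) \<and> mul (?N F x) (?N G x) = mul (?N G x) (?N F x)"
    if x_circ: "x \<in> circ mul one cj D" for x
  proof -
    obtain z J where z: "z \<in> D" and J: "J \<in> sph mul one cj"
      and x: "x = Re z *\<^sub>R one + Im z *\<^sub>R J"
      using x_circ by (rule circE)
    note slice_value = slice_of_cscale_unit[OF stem_on_stem_N z J]
    show ?thesis
      unfolding x slice_value[OF stem_on_stem_prod[OF stemF stemG] N_prod(1)[OF z]]
        slice_value[OF stemF tame_onD(1)[OF sph_ne stemF tameF z]]
        slice_value[OF stemG tame_onD(1)[OF sph_ne stemG tameG z]]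
      by (simp only: sph_mult_complex[OF J] mult.commute)
  qed
  moreover have "slice_regular_on D (stem_prod mul F G)"
    by (rule slice_regular_on_stem_prod[OF regF regG])
  moreover have "tame_on mul one cj D (stem_prod mul F G)"
    by (rule tame_onI[OF sph_ne stem_on_stem_prod[OF stemF stemG] N_prod])
  ultimately show ?thesis
    by blast
qed

end
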